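(* Let $\mathcal{H}=(V,E)$ be a hypergraph with connected components $\mathcal{H}_1=(V_1,E_1),\dots,\mathcal{H}_t=(V_t,E_t)$. Then $\kappa(\mathcal{H})=\sum_{i=1}^t\kappa(\mathcal{H}_i)$.
   Context: For $S\subseteq V$, $\mathcal{H}[S]$ is the hypergraph with vertex set $S$ and edge set $\{S\cap e : e\in E,\ S\cap e\neq\emptyset\}$. The reduced hypergraph $\mathsf{red}(\mathcal{H})$ has the same vertex set and is obtained by removing every edge $e$ for which there is another edge $e'\neq e$ with $e\subseteq e'$. $\tau^*(\mathcal{H})$ denotes the value of a maximum fractional edge packing of $\mathcal{H}$ (equivalently, of a minimum fractional vertex cover). The reduced quasi vertex-cover is $\kappa(\mathcal{H})=\max_{S\subseteq V}\tau^*(\mathsf{red}(\mathcal{H}[S]))$. *)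

theory Defs
  imports Main "HOL.Real"
begin

definition hypergraph :: "'a set \<Rightarrow> 'a set set \<Rightarrow> bool" where
  "hypergraph V E \<longleftrightarrow> finite V \<and> (\<forall>e\<in>E. e \<subseteq> V \<and> e \<noteq> {})"

definition induced_edges :: "'a set \<Rightarrow> 'a set set \<Rightarrow> 'a set set" where
  "induced_edges S E = {S \<inter> e | e. e \<in> E \<and> S \<inter> e \<noteq> {}}"

definition red_edges :: "'a set set \<Rightarrow> 'a set set" where
  "red_edges E = {e \<in> E. \<not> (\<exists>e'\<in>E. e' \<noteq> e \<and> e \<subseteq> e')}"

definition frac_edge_packing :: "'a set \<Rightarrow> 'a set set \<Rightarrow> ('a set \<Rightarrow> real) \<Rightarrow> bool" where
  "frac_edge_packing V E w \<longleftrightarrow>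
     (\<forall>e\<in>E. 0 \<le> w e) \<and> (\<forall>v\<in>V. (\<Sum>e\<in>{e\<in>E. v \<in> e}. w e) \<le> 1)"

definition tau_star :: "'a set \<Rightarrow> 'a set set \<Rightarrow> real" where
  "tau_star V E = Sup {(\<Sum>e\<in>E. w e) | w. frac_edge_packing V E w}"

definition kappa :: "'a set \<Rightarrow> 'a set set \<Rightarrow> real" where
  "kappa V E = Max ((\<lambda>S. tau_star S (red_edges (induced_edges S E))) ` Pow V)"

definition adj_rel :: "'a set \<Rightarrow> 'a set set \<Rightarrow> ('a \<times> 'a) set" where
  "adj_rel V E = {(u, v). u \<in> V \<and> v \<in> V \<and> (\<exists>e\<in>E. u \<in> e \<and> v \<in> e)}"

definition components :: "'a set \<Rightarrow> 'a set set \<Rightarrow> 'a set set" where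
  "components V E = {(adj_rel V E)\<^sup>* `` {v} | v. v \<in> V}"

definition component_edges :: "'a set set \<Rightarrow> 'a set \<Rightarrow> 'a set set" where
  "component_edges E C = {e \<in> E. e \<subseteq> C}"

end

theory Submission
  imports Defs "HOL-Library.Disjoint_Sets"
begin

text \<open>For S \<subseteq> V, every edge of H[S] lies in a single component C and is an edge of
H_C[S \<inter> C]; two comparable nonempty edges meet, hence lie in the same component, so
red(H[S]) is the disjoint union of the red(H_C[S \<inter> C]). The fractional packing LP of a
vertex-disjoint union of hypergraphs splits into independent LPs, so tau* is additive over
components. Thus kappa(H) maximises over S \<subseteq> V a sum whose C-th term depends only on
S \<inter> C, and since S \<mapsto> (S \<inter> C)_C is a bijection onto the product of the Pow C, the
maximum of the sum is the sum of the maxima.\<close>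

lemma cSup_add_sets:
  fixes A B :: "'a::{conditionally_complete_linorder, ordered_ab_group_add} set"
  assumes "A \<noteq> {}" "B \<noteq> {}" "bdd_above A" "bdd_above B"
  shows "Sup {a + b | a b. a \<in> A \<and> b \<in> B} = Sup A + Sup B"
proof (rule cSup_eq_non_empty)
  show "{a + b | a b. a \<in> A \<and> b \<in> B} \<noteq> {}" using assms(1,2) by blast
  show "x \<le> Sup A + Sup B" if "x \<in> {a + b | a b. a \<in> A \<and> b \<in> B}" for x
    using that assms(3,4) by (auto intro: add_mono cSup_upper)
  fix y assume y: "\<And>x. x \<in> {a + b | a b. a \<in> A \<and> b \<in> B} \<Longrightarrow> x \<le> y"
  have "Sup A \<le> y - b" if "b \<in> B" for b
    using y that assms(1) by (intro cSup_least) (auto simp: le_diff_eq)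
  then have "Sup B \<le> y - Sup A"
    using assms(2) by (intro cSup_least) (auto simp: le_diff_eq add.commute)
  then show "Sup A + Sup B \<le> y" by (simp add: le_diff_eq add.commute)
qed

lemma Max_Pow_Union_sum:
  fixes g :: "'a set \<Rightarrow> 'a set \<Rightarrow> 'b::{linorder, ordered_comm_monoid_add}"
  assumes "finite P" "\<And>C. C \<in> P \<Longrightarrow> finite C" "disjoint P"
  shows "Max ((\<lambda>S. \<Sum>C\<in>P. g C (S \<inter> C)) ` Pow (\<Union>P)) = (\<Sum>C\<in>P. Max (g C ` Pow C))"
proof (rule antisym)
  have "(\<Sum>C\<in>P. g C (S \<inter> C)) \<le> (\<Sum>C\<in>P. Max (g C ` Pow C))" for S
    using assms(2) by (intro sum_mono Max_ge) auto
  moreover have "finite (Pow (\<Union>P))" using assms(1,2) by auto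
  ultimately show "Max ((\<lambda>S. \<Sum>C\<in>P. g C (S \<inter> C)) ` Pow (\<Union>P)) \<le>
      (\<Sum>C\<in>P. Max (g C ` Pow C))"
    by (intro Max.boundedI) auto
next
  have "\<exists>T. T \<subseteq> C \<and> g C T = Max (g C ` Pow C)" if "C \<in> P" for C
  proof -
    have "Max (g C ` Pow C) \<in> g C ` Pow C" using assms(2)[OF that] by (intro Max_in) auto
    then show ?thesis by (metis PowD imageE)
  qed
  then obtain T where T: "\<And>C. C \<in> P \<Longrightarrow> T C \<subseteq> C \<and> g C (T C) = Max (g C ` Pow C)"
    by metis
  define S where "S = (\<Union>C\<in>P. T C)"
  have S_Int: "S \<inter> C = T C" if "C \<in> P" for C
  proof
    show "T C \<subseteq> S \<inter> C" unfolding S_def using T that by blast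
    show "S \<inter> C \<subseteq> T C"
    proof
      fix x assume "x \<in> S \<inter> C"
      then obtain D where D: "D \<in> P" "x \<in> T D" "x \<in> C" unfolding S_def by blast
      then have "x \<in> D" using T by blast
      then have "D = C" using assms(3) D(1,3) that unfolding pairwise_def disjnt_def by blast
      then show "x \<in> T C" using D(2) by simp
    qed
  qed
  have "(\<Sum>C\<in>P. Max (g C ` Pow C)) = (\<Sum>C\<in>P. g C (S \<inter> C))"
    using T S_Int by simp
  also have "\<dots> \<le> Max ((\<lambda>S. \<Sum>C\<in>P. g C (S \<inter> C)) ` Pow (\<Union>P))"
  proof (rule Max_ge)
    show "finite ((\<lambda>S. \<Sum>C\<in>P. g C (S \<inter> C)) ` Pow (\<Union>P))" using assms(1,2) by auto
    have "S \<subseteq> \<Union>P" unfolding S_def using T by blast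
    then show "(\<Sum>C\<in>P. g C (S \<inter> C)) \<in> (\<lambda>S. \<Sum>C\<in>P. g C (S \<inter> C)) ` Pow (\<Union>P)"
      by blast
  qed
  finally show "(\<Sum>C\<in>P. Max (g C ` Pow C)) \<le>
      Max ((\<lambda>S. \<Sum>C\<in>P. g C (S \<inter> C)) ` Pow (\<Union>P))" .
qed

definition packing_values :: "'a set \<Rightarrow> 'a set set \<Rightarrow> real set" where
  "packing_values V E = {(\<Sum>e\<in>E. w e) | w. frac_edge_packing V E w}"

lemma tau_star_eq_Sup_packing_values: "tau_star V E = Sup (packing_values V E)"
  unfolding tau_star_def packing_values_def ..

lemma frac_edge_packing_cong:
  "(\<And>e. e \<in> E \<Longrightarrow> w e = w' e) \<Longrightarrow> frac_edge_packing V E w \<longleftrightarrow> frac_edge_packing V E w'"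
  unfolding frac_edge_packing_def by simp

lemma frac_edge_packing_zero: "frac_edge_packing V E (\<lambda>_. 0)"
  unfolding frac_edge_packing_def by simp

lemma packing_values_nonempty: "packing_values V E \<noteq> {}"
  unfolding packing_values_def using frac_edge_packing_zero by blast

lemma frac_edge_packing_le_1:
  assumes "frac_edge_packing V E w" "finite E" "e \<in> E" "v \<in> e" "v \<in> V"
  shows "w e \<le> 1"
proof -
  have "w e \<le> (\<Sum>e\<in>{e\<in>E. v \<in> e}. w e)"
    using assms by (intro member_le_sum) (auto simp: frac_edge_packing_def)
  also have "\<dots> \<le> 1" using assms by (simp add: frac_edge_packing_def)
  finally show ?thesis .
qed

lemma hypergraph_finite_edges: "hypergraph V E \<Longrightarrow> finite E"
  unfolding hypergraph_def by (meson PowI finite_Pow_iff finite_subset subsetI)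

text \<open>Nonemptiness of the edges is essential here: an empty edge carries unconstrained weight,
and the supremum of an unbounded set of reals is a junk value.\<close>

lemma packing_values_bdd_above:
  assumes "hypergraph V E"
  shows "bdd_above (packing_values V E)"
proof (rule bdd_aboveI)
  have "finite E" using assms by (rule hypergraph_finite_edges)
  fix x assume "x \<in> packing_values V E"
  then obtain w where x: "x = (\<Sum>e\<in>E. w e)" and w: "frac_edge_packing V E w"
    unfolding packing_values_def by blast
  have "w e \<le> 1" if "e \<in> E" for e
  proof -
    obtain v where "v \<in> e" "v \<in> V" using assms \<open>e \<in> E\<close> unfolding hypergraph_def by blast
    then show ?thesis using frac_edge_packing_le_1[OF w \<open>finite E\<close> \<open>e \<in> E\<close>] by blast
  qed
  then show "x \<le> real (card E)" unfolding x using sum_mono[of E w "\<lambda>_. 1"] by simp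
qed

lemma frac_edge_packing_Un_iff:
  assumes "\<forall>e\<in>E1. e \<subseteq> V1" "\<forall>e\<in>E2. e \<subseteq> V2" "V1 \<inter> V2 = {}"
  shows "frac_edge_packing (V1 \<union> V2) (E1 \<union> E2) w \<longleftrightarrow>
    frac_edge_packing V1 E1 w \<and> frac_edge_packing V2 E2 w"
proof -
  have "{e \<in> E1 \<union> E2. v \<in> e} = {e \<in> E1. v \<in> e}" if "v \<in> V1" for v
    using assms that by blast
  moreover have "{e \<in> E1 \<union> E2. v \<in> e} = {e \<in> E2. v \<in> e}" if "v \<in> V2" for v
    using assms that by blast
  ultimately show ?thesis
    unfolding frac_edge_packing_def ball_Un by (simp only: cong: ball_cong) blast
qed

lemma packing_values_Un:
  assumes "hypergraph V1 E1" "hypergraph V2 E2" "V1 \<inter> V2 = {}"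
  shows "packing_values (V1 \<union> V2) (E1 \<union> E2) =
    {a + b | a b. a \<in> packing_values V1 E1 \<and> b \<in> packing_values V2 E2}"
proof -
  have sub: "\<forall>e\<in>E1. e \<subseteq> V1" "\<forall>e\<in>E2. e \<subseteq> V2"
    using assms(1,2) unfolding hypergraph_def by auto
  have "E1 \<inter> E2 = {}"
  proof -
    have "e \<subseteq> V1 \<inter> V2" if "e \<in> E1 \<inter> E2" for e
      using sub that by blast
    moreover have "e \<noteq> {}" if "e \<in> E1" for e
      using assms(1) that unfolding hypergraph_def by blast
    ultimately show ?thesis using assms(3) by blast
  qed
  then have sum_Un: "(\<Sum>e\<in>E1 \<union> E2. w e) = (\<Sum>e\<in>E1. w e) + (\<Sum>e\<in>E2. w e)"
    for w :: "'a set \<Rightarrow> real"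
    using assms(1,2) by (simp add: hypergraph_finite_edges sum.union_disjoint)
  show ?thesis
  proof (intro set_eqI iffI)
    fix x assume "x \<in> packing_values (V1 \<union> V2) (E1 \<union> E2)"
    then obtain w where x: "x = (\<Sum>e\<in>E1 \<union> E2. w e)"
      and w: "frac_edge_packing (V1 \<union> V2) (E1 \<union> E2) w"
      unfolding packing_values_def by blast
    have "(\<Sum>e\<in>E1. w e) \<in> packing_values V1 E1" "(\<Sum>e\<in>E2. w e) \<in> packing_values V2 E2"
      using w unfolding packing_values_def frac_edge_packing_Un_iff[OF sub assms(3)] by auto
    then show "x \<in> {a + b | a b. a \<in> packing_values V1 E1 \<and> b \<in> packing_values V2 E2}"
      unfolding x sum_Un by blast
  next
    fix x assume "x \<in> {a + b | a b. a \<in> packing_values V1 E1 \<and> b \<in> packing_values V2 E2}"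
    then obtain w1 w2 where x: "x = (\<Sum>e\<in>E1. w1 e) + (\<Sum>e\<in>E2. w2 e)"
      and w1: "frac_edge_packing V1 E1 w1" and w2: "frac_edge_packing V2 E2 w2"
      unfolding packing_values_def by blast
    define w where "w e = (if e \<in> E1 then w1 e else w2 e)" for e
    have w_E1: "w e = w1 e" if "e \<in> E1" for e
      using that by (simp add: w_def)
    have w_E2: "w e = w2 e" if "e \<in> E2" for e
      using that \<open>E1 \<inter> E2 = {}\<close> by (auto simp: w_def)
    have "frac_edge_packing (V1 \<union> V2) (E1 \<union> E2) w"
      unfolding frac_edge_packing_Un_iff[OF sub assms(3)]
      using frac_edge_packing_cong[of E1 w w1 V1] frac_edge_packing_cong[of E2 w w2 V2]
        w_E1 w_E2 w1 w2 by blast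
    moreover have "x = (\<Sum>e\<in>E1 \<union> E2. w e)"
      unfolding x sum_Un using w_E1 w_E2 by simp
    ultimately show "x \<in> packing_values (V1 \<union> V2) (E1 \<union> E2)"
      unfolding packing_values_def by blast
  qed
qed

lemma tau_star_Un:
  assumes "hypergraph V1 E1" "hypergraph V2 E2" "V1 \<inter> V2 = {}"
  shows "tau_star (V1 \<union> V2) (E1 \<union> E2) = tau_star V1 E1 + tau_star V2 E2"
  unfolding tau_star_eq_Sup_packing_values packing_values_Un[OF assms]
  using assms(1,2) by (intro cSup_add_sets packing_values_nonempty packing_values_bdd_above)

lemma tau_star_empty: "tau_star V {} = 0"
proof -
  have "packing_values V {} = {0}"
    unfolding packing_values_def using frac_edge_packing_zero by auto
  then show ?thesis by (simp add: tau_star_eq_Sup_packing_values)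
qed

lemma hypergraph_UN:
  "finite I \<Longrightarrow> (\<And>i. i \<in> I \<Longrightarrow> hypergraph (V i) (E i)) \<Longrightarrow>
    hypergraph (\<Union>i\<in>I. V i) (\<Union>i\<in>I. E i)"
  unfolding hypergraph_def by blast

lemma tau_star_UN:
  assumes "finite I" "disjoint_family_on V I" "\<And>i. i \<in> I \<Longrightarrow> hypergraph (V i) (E i)"
  shows "tau_star (\<Union>i\<in>I. V i) (\<Union>i\<in>I. E i) = (\<Sum>i\<in>I. tau_star (V i) (E i))"
  using assms
proof (induction I rule: finite_induct)
  case empty
  then show ?case by (simp add: tau_star_empty)
next
  case (insert i I)
  have "V i \<inter> V j = {}" if "j \<in> I" for j
    using insert.hyps(2) that by (intro disjoint_family_onD[OF insert.prems(1)]) auto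
  then have "V i \<inter> (\<Union>j\<in>I. V j) = {}" by blast
  then have "tau_star (\<Union>j\<in>insert i I. V j) (\<Union>j\<in>insert i I. E j)
      = tau_star (V i) (E i) + tau_star (\<Union>j\<in>I. V j) (\<Union>j\<in>I. E j)"
    using insert.hyps(1) insert.prems(2) by (simp add: tau_star_Un hypergraph_UN)
  also have "\<dots> = (\<Sum>j\<in>insert i I. tau_star (V j) (E j))"
    using insert disjoint_family_on_mono[OF subset_insertI insert.prems(1)] by simp
  finally show ?case .
qed

text \<open>The reflexive-transitive closure is reflexive on the whole type, so it is cut down to
V \<times> V to obtain an equivalence relation on V whose classes are the components.\<close>

definition component_rel :: "'a set \<Rightarrow> 'a set set \<Rightarrow> ('a \<times> 'a) set" where
  "component_rel V E = (adj_rel V E)\<^sup>* \<inter> V \<times> V"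

lemma adj_rel_rtrancl_closed: "(u, v) \<in> (adj_rel V E)\<^sup>* \<Longrightarrow> u \<in> V \<Longrightarrow> v \<in> V"
  by (induction rule: rtrancl_induct) (auto simp: adj_rel_def)

lemma equiv_component_rel: "equiv V (component_rel V E)"
proof (rule equivI)
  show "component_rel V E \<subseteq> V \<times> V" unfolding component_rel_def by blast
  have "sym (adj_rel V E)" by (auto simp: sym_def adj_rel_def)
  then show "sym (component_rel V E)"
    unfolding component_rel_def by (intro sym_Int sym_rtrancl) (auto simp: sym_def)
  show "trans (component_rel V E)"
    unfolding component_rel_def by (intro trans_Int trans_rtrancl) (auto simp: trans_def)
  show "refl_on V (component_rel V E)"
    unfolding component_rel_def refl_on_def by blast
qed

lemma components_eq_quotient: "components V E = V // component_rel V E"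
proof -
  have "(adj_rel V E)\<^sup>* `` {v} = component_rel V E `` {v}" if "v \<in> V" for v
    using that unfolding component_rel_def by (auto dest: adj_rel_rtrancl_closed)
  then have "(\<lambda>v. (adj_rel V E)\<^sup>* `` {v}) ` V = (\<lambda>v. component_rel V E `` {v}) ` V"
    by (rule image_cong[OF refl])
  moreover have "components V E = (\<lambda>v. (adj_rel V E)\<^sup>* `` {v}) ` V"
    unfolding components_def by blast
  moreover have "V // component_rel V E = (\<lambda>v. component_rel V E `` {v}) ` V"
    unfolding quotient_def by blast
  ultimately show ?thesis by simp
qed

lemma edge_subset_component:
  assumes "hypergraph V E" "e \<in> E"
  obtains C where "C \<in> components V E" "e \<subseteq> C"
proof -
  obtain u where u: "u \<in> e" using assms unfolding hypergraph_def by blast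
  have "u \<in> V" "e \<subseteq> V" using assms u unfolding hypergraph_def by auto
  have "(u, v) \<in> adj_rel V E" if "v \<in> e" for v
    using assms(2) u that \<open>e \<subseteq> V\<close> unfolding adj_rel_def by blast
  then have "e \<subseteq> (adj_rel V E)\<^sup>* `` {u}" by blast
  then show ?thesis using that \<open>u \<in> V\<close> unfolding components_def by blast
qed

lemma Union_components: "\<Union>(components V E) = V"
  unfolding components_eq_quotient using equiv_component_rel by (rule Union_quotient)

lemma component_subset: "C \<in> components V E \<Longrightarrow> C \<subseteq> V"
  unfolding components_eq_quotient using equiv_component_rel by (rule in_quotient_imp_subset)

lemma components_eqI:
  "C \<in> components V E \<Longrightarrow> D \<in> components V E \<Longrightarrow> C \<inter> D \<noteq> {} \<Longrightarrow> C = D"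
  using quotient_disj[OF equiv_component_rel[of V E], of C D] unfolding components_eq_quotient by auto

lemma disjoint_components: "disjoint (components V E)"
  unfolding pairwise_def disjnt_def using components_eqI by blast

lemma finite_components: "finite V \<Longrightarrow> finite (components V E)"
  unfolding components_eq_quotient component_rel_def by (rule finite_quotient) auto

lemma hypergraph_induced_edges: "finite S \<Longrightarrow> hypergraph S (induced_edges S E)"
  unfolding hypergraph_def induced_edges_def by blast

lemma hypergraph_red_edges: "hypergraph V E \<Longrightarrow> hypergraph V (red_edges E)"
  unfolding hypergraph_def red_edges_def by blast

lemma mem_red_edges: "x \<in> red_edges X \<longleftrightarrow> x \<in> X \<and> (\<forall>y\<in>X. x \<subseteq> y \<longrightarrow> y = x)"
  unfolding red_edges_def by auto

lemma red_edges_UN: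
  assumes "\<And>i j x y. i \<in> I \<Longrightarrow> j \<in> I \<Longrightarrow> x \<in> F i \<Longrightarrow> y \<in> F j \<Longrightarrow> x \<subseteq> y \<Longrightarrow> y \<in> F i"
  shows "red_edges (\<Union>i\<in>I. F i) = (\<Union>i\<in>I. red_edges (F i))"
proof (intro equalityI subsetI)
  fix x assume x: "x \<in> red_edges (\<Union>i\<in>I. F i)"
  then obtain i where i: "i \<in> I" "x \<in> F i" unfolding mem_red_edges by auto
  have "F i \<subseteq> (\<Union>i\<in>I. F i)" using i(1) by auto
  then have "x \<in> red_edges (F i)" using x i(2) unfolding mem_red_edges by auto
  then show "x \<in> (\<Union>i\<in>I. red_edges (F i))" using i(1) by auto
next
  fix x assume "x \<in> (\<Union>i\<in>I. red_edges (F i))"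
  then obtain i where i: "i \<in> I" "x \<in> red_edges (F i)" by auto
  have "y = x" if y: "y \<in> (\<Union>i\<in>I. F i)" "x \<subseteq> y" for y
  proof -
    from y(1) obtain j where j: "j \<in> I" "y \<in> F j" by auto
    have "x \<in> F i" using i(2) unfolding mem_red_edges by auto
    then have "y \<in> F i" using assms[OF i(1) j(1) _ j(2) y(2)] by simp
    then show ?thesis using i(2) y(2) unfolding mem_red_edges by auto
  qed
  moreover have "x \<in> (\<Union>i\<in>I. F i)" using i unfolding mem_red_edges by auto
  ultimately show "x \<in> red_edges (\<Union>i\<in>I. F i)" unfolding mem_red_edges by auto
qed

lemma induced_edges_UN_components:
  assumes "hypergraph V E"
  shows "induced_edges S E = (\<Union>C\<in>components V E. induced_edges (S \<inter> C) (component_edges E C))"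
proof (intro equalityI subsetI)
  fix x assume "x \<in> induced_edges S E"
  then obtain e where e: "e \<in> E" "x = S \<inter> e" "x \<noteq> {}" unfolding induced_edges_def by auto
  obtain C where C: "C \<in> components V E" "e \<subseteq> C" using edge_subset_component[OF assms e(1)] .
  have "x = (S \<inter> C) \<inter> e" using e(2) C(2) by auto
  then have "x \<in> induced_edges (S \<inter> C) (component_edges E C)"
    using e C(2) unfolding induced_edges_def component_edges_def by auto
  then show "x \<in> (\<Union>C\<in>components V E. induced_edges (S \<inter> C) (component_edges E C))"
    using C(1) by auto
next
  fix x assume "x \<in> (\<Union>C\<in>components V E. induced_edges (S \<inter> C) (component_edges E C))"
  then obtain C e where "e \<in> E" "e \<subseteq> C" "x = (S \<inter> C) \<inter> e" "x \<noteq> {}"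
    unfolding induced_edges_def component_edges_def by auto
  moreover have "(S \<inter> C) \<inter> e = S \<inter> e" using \<open>e \<subseteq> C\<close> by auto
  ultimately show "x \<in> induced_edges S E" unfolding induced_edges_def by auto
qed

lemma red_induced_edges_UN_components:
  assumes "hypergraph V E"
  shows "red_edges (induced_edges S E) =
    (\<Union>C\<in>components V E. red_edges (induced_edges (S \<inter> C) (component_edges E C)))"
proof -
  let ?F = "\<lambda>C. induced_edges (S \<inter> C) (component_edges E C)"
  have "y \<in> ?F C"
    if C: "C \<in> components V E" "D \<in> components V E" and xy: "x \<in> ?F C" "y \<in> ?F D" "x \<subseteq> y"
    for C D x y
  proof -
    have "x \<noteq> {}" "x \<subseteq> C" "y \<subseteq> D" using xy(1,2) unfolding induced_edges_def by auto
    then have "C \<inter> D \<noteq> {}" using xy(3) by auto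
    then have "C = D" using C by (rule components_eqI[rotated 2])
    then show ?thesis using xy(2) by simp
  qed
  then show ?thesis
    unfolding induced_edges_UN_components[OF assms] by (rule red_edges_UN)
qed

lemma tau_star_red_induced_edges_components:
  assumes "hypergraph V E" "S \<subseteq> V"
  shows "tau_star S (red_edges (induced_edges S E)) =
    (\<Sum>C\<in>components V E.
      tau_star (S \<inter> C) (red_edges (induced_edges (S \<inter> C) (component_edges E C))))"
proof -
  define F where "F C = red_edges (induced_edges (S \<inter> C) (component_edges E C))" for C
  have finV: "finite V" using assms(1) unfolding hypergraph_def by auto
  have "S = (\<Union>C\<in>components V E. S \<inter> C)"
    using assms(2) Union_components[of V E] by auto
  then have "tau_star S (\<Union>C\<in>components V E. F C) =
      tau_star (\<Union>C\<in>components V E. S \<inter> C) (\<Union>C\<in>components V E. F C)"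
    by (rule arg_cong[where f = "\<lambda>T. tau_star T (\<Union>C\<in>components V E. F C)"])
  also have "\<dots> = (\<Sum>C\<in>components V E. tau_star (S \<inter> C) (F C))"
  proof (rule tau_star_UN)
    show "finite (components V E)" using finV by (rule finite_components)
    show "disjoint_family_on (\<lambda>C. S \<inter> C) (components V E)"
      unfolding disjoint_family_on_def
    proof (intro ballI impI)
      fix C D assume "C \<in> components V E" "D \<in> components V E" "C \<noteq> D"
      then show "S \<inter> C \<inter> (S \<inter> D) = {}" using components_eqI[of C V E D] by auto
    qed
    show "hypergraph (S \<inter> C) (F C)" for C
      unfolding F_def using finV assms(2)
      by (intro hypergraph_red_edges hypergraph_induced_edges) (auto intro: finite_subset)
  qed
  finally show ?thesis
    unfolding red_induced_edges_UN_components[OF assms(1)] F_def .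
qed

theorem lemma3p5:
  fixes V :: "'a set" and E :: "'a set set"
  assumes "hypergraph V E"
  shows "kappa V E = (\<Sum>C\<in>components V E. kappa C (component_edges E C))"
proof -
  let ?P = "components V E"
  let ?g = "\<lambda>C T. tau_star T (red_edges (induced_edges T (component_edges E C)))"
  have finV: "finite V" using assms unfolding hypergraph_def by auto
  have "kappa V E = Max ((\<lambda>S. tau_star S (red_edges (induced_edges S E))) ` Pow V)"
    unfolding kappa_def ..
  also have "\<dots> = Max ((\<lambda>S. \<Sum>C\<in>?P. ?g C (S \<inter> C)) ` Pow (\<Union>?P))"
    unfolding Union_components using tau_star_red_induced_edges_components[OF assms]
    by (intro arg_cong[where f = Max] image_cong) auto
  also have "\<dots> = (\<Sum>C\<in>?P. Max (?g C ` Pow C))"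
  proof (rule Max_Pow_Union_sum)
    show "finite ?P" using finV by (rule finite_components)
    show "finite C" if "C \<in> ?P" for C
      using finV component_subset[OF that] by (rule finite_subset[rotated])
    show "disjoint ?P" by (rule disjoint_components)
  qed
  also have "\<dots> = (\<Sum>C\<in>?P. kappa C (component_edges E C))"
    unfolding kappa_def ..
  finally show ?thesis .
qed

end
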